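(* Let $N=3$, $p>5$, $\lambda>0$ and $b>0$. If the problem \[ u''+\frac{2}{r}u'+\lambda u+u^p=0,\ r\in(0,b),\qquad u'(0)=u(b)=0, \] has a positive solution, then \[ \frac{1}{\sqrt{\lambda}}\left(\frac{2\sqrt{2(p-5)}}{p+3}+\arccos\left(-\sqrt{\frac{p-5}{p+3}}\right)\right)<b<\frac{\pi}{\sqrt{\lambda}}, \] equivalently \[ \frac{1}{\pi^2}\left(\frac{2\sqrt{2(p-5)}}{p+3}+\arccos\left(-\sqrt{\frac{p-5}{p+3}}\right)\right)^2\lambda_1(B(b))<\lambda<\lambda_1(B(b)), \] where $\lambda_1(B(b))=\pi^2/b^2$.
   Context: $\lambda_1(B(b))$ is the first Dirichlet eigenvalue of $-\Delta$ on the ball of radius $b$ in $\mathbb{R}^3$. A positive solution is one positive on $[0,b)$. *)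

theory Defs
  imports "HOL-Analysis.Analysis"
begin

definition positive_radial_solution :: "real \<Rightarrow> real \<Rightarrow> real \<Rightarrow> (real \<Rightarrow> real) \<Rightarrow> bool" where
  "positive_radial_solution p lam b u \<longleftrightarrow>
     (\<exists>du :: real \<Rightarrow> real.
        continuous_on {0..b} u \<and>
        (\<forall>r\<in>{0..<b}. (u has_real_derivative du r) (at r within {0..b})) \<and>
        (\<forall>r\<in>{0<..<b}. \<exists>d2. (du has_real_derivative d2) (at r) \<and>
              d2 + 2 / r * du r + lam * u r + (u r) powr p = 0) \<and>
        du 0 = 0 \<and> u b = 0 \<and>
        (\<forall>r\<in>{0..<b}. u r > 0))"

end

theory Submission
  imports Defs
begin

(* Put v = r u; then v'' + \<lambda> v = - r u^p on (0, b), and v vanishes at both ends.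

   Upper bound: the Wronskian sin(\<surd>\<lambda> r) v' - \<surd>\<lambda> cos(\<surd>\<lambda> r) v of v and sin(\<surd>\<lambda> r) has
   derivative - r u^p sin(\<surd>\<lambda> r), so it strictly decreases on (0, \<pi>/\<surd>\<lambda>).  It tends to 0
   at r = 0, but if \<pi>/\<surd>\<lambda> \<le> b it would tend to \<surd>\<lambda> v(\<pi>/\<surd>\<lambda>) \<ge> 0 at the right end.

   Lower bound: for every weight a with a''' = -4\<lambda> a' the Pohozaev-type functional
     E = a (v'^2/2 + \<lambda> v^2/2 + r^2 u^(p+1)/(p+1)) + a'' v^2/4 - a' v v'/2
   satisfies E' = r u^(p+1)/(2(p+1)) ((p+3) r a' - 2(p-1) a).  For the weight
   a(r) = sin(\<surd>\<lambda> r) sin(\<surd>\<lambda> (b - r)) the functional E vanishes at 0 and at b, while for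
   \<surd>\<lambda> b at most the critical angle the bracket is \<le> 0, and < 0 somewhere.  The critical
   angle is the minimum \<theta> + c sqrt(1 - c^2) of x - c^2 tan x on (\<pi>/2, \<pi>), attained at
   \<theta> = arccos(-c), where c^2 = (p-5)/(p+3). *)

lemma DERIV_abs_bound_imp_abs_diff_le:
  fixes f f' :: "real \<Rightarrow> real"
  assumes "s \<le> t"
    and deriv: "\<And>x. s \<le> x \<Longrightarrow> x \<le> t \<Longrightarrow> (f has_real_derivative f' x) (at x)"
    and bound: "\<And>x. s \<le> x \<Longrightarrow> x \<le> t \<Longrightarrow> \<bar>f' x\<bar> \<le> K"
  shows "\<bar>f t - f s\<bar> \<le> K * (t - s)"
proof (cases "s = t")
  case False
  then obtain z where z: "s < z" "z < t" "f t - f s = (t - s) * f' z"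
    using MVT2[of s t f f'] assms(1) deriv by force
  have "\<bar>(t - s) * f' z\<bar> \<le> (t - s) * K"
    using bound[of z] z assms(1) by (simp add: abs_mult mult_left_mono)
  then show ?thesis using z(3) by (simp add: mult.commute)
qed simp

lemma DERIV_nonpos_imp_limits_less:
  fixes f f' :: "real \<Rightarrow> real"
  assumes "a < m" "m < c"
    and deriv: "\<And>x. a < x \<Longrightarrow> x < c \<Longrightarrow> (f has_real_derivative f' x) (at x)"
    and nonpos: "\<And>x. a < x \<Longrightarrow> x < c \<Longrightarrow> f' x \<le> 0" and "f' m < 0"
    and lim_a: "(f \<longlongrightarrow> l) (at_right a)" and lim_c: "(f \<longlongrightarrow> L) (at_left c)"
  shows "L < l"
proof -
  have antimono: "f t \<le> f s" if "a < s" "s \<le> t" "t < c" for s t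
  proof (rule DERIV_nonpos_imp_nonincreasing[OF that(2)])
    fix x assume "s \<le> x" "x \<le> t"
    with that show "\<exists>y. (f has_real_derivative y) (at x) \<and> y \<le> 0"
      by (intro exI[of _ "f' x"] conjI deriv nonpos) auto
  qed
  obtain d where "d > 0" and drop: "\<And>h. 0 < h \<Longrightarrow> h < d \<Longrightarrow> f (m + h) < f m"
    using DERIV_neg_dec_right[OF deriv[OF assms(1,2)] assms(5)] by blast
  define h where "h = min (d/2) ((c - m)/2)"
  have h: "0 < h" "h < d" "m + h < c"
    using \<open>d > 0\<close> assms(2) unfolding h_def by (auto simp: min_def field_simps)
  define x where "x = m + h"
  have x: "m < x" "x < c" "f x < f m"
    using h drop unfolding x_def by auto
  have "f m \<le> l"
    by (rule tendsto_lowerbound[OF lim_a])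
      (use assms(1,2) in \<open>auto simp: eventually_at_right_field intro!: exI[of _ m] antimono\<close>)
  moreover have "L \<le> f x"
    by (rule tendsto_upperbound[OF lim_c])
      (use x assms(1) in \<open>auto simp: eventually_at_left_field intro!: exI[of _ x] antimono\<close>)
  ultimately show ?thesis using x(3) by linarith
qed

lemma Bfun_add:
  fixes f g :: "'a \<Rightarrow> 'b::real_normed_vector"
  assumes "Bfun f F" "Bfun g F"
  shows "Bfun (\<lambda>x. f x + g x) F"
proof -
  obtain A B where "eventually (\<lambda>x. norm (f x) \<le> A) F" "eventually (\<lambda>x. norm (g x) \<le> B) F"
    using assms by (auto elim!: BfunE)
  then have "eventually (\<lambda>x. norm (f x + g x) \<le> A + B) F"
    by eventually_elim (rule norm_triangle_le, simp add: add_mono)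
  then show ?thesis by (rule BfunI)
qed

lemma Bfun_diff:
  fixes f g :: "'a \<Rightarrow> 'b::real_normed_vector"
  assumes "Bfun f F" "Bfun g F"
  shows "Bfun (\<lambda>x. f x - g x) F"
proof -
  obtain A B where "eventually (\<lambda>x. norm (f x) \<le> A) F" "eventually (\<lambda>x. norm (g x) \<le> B) F"
    using assms by (auto elim!: BfunE)
  then have "eventually (\<lambda>x. norm (f x - g x) \<le> A + B) F"
    by eventually_elim (rule norm_triangle_le_diff, simp add: add_mono)
  then show ?thesis by (rule BfunI)
qed

lemma Bfun_mult:
  fixes f g :: "'a \<Rightarrow> 'b::real_normed_algebra"
  assumes "Bfun f F" "Bfun g F"
  shows "Bfun (\<lambda>x. f x * g x) F"
proof -
  obtain A B where "eventually (\<lambda>x. norm (f x) \<le> A) F" "eventually (\<lambda>x. norm (g x) \<le> B) F"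
    using assms by (auto elim!: BfunE)
  then have "eventually (\<lambda>x. norm (f x * g x) \<le> A * B) F"
    by eventually_elim (rule order_trans[OF norm_mult_ineq], simp add: mult_mono')
  then show ?thesis by (rule BfunI)
qed

lemma tendsto_imp_Bfun:
  assumes "(f \<longlongrightarrow> l) F"
  shows "Bfun f F"
  unfolding Bfun_metric_def
proof (intro exI conjI)
  show "eventually (\<lambda>x. dist (f x) l \<le> 1) F"
    using tendstoD[OF assms, of 1] by (auto elim: eventually_mono)
qed simp

lemma tendsto_zero_mult_Bfun:
  fixes f g :: "'a \<Rightarrow> 'b::real_normed_algebra"
  assumes "(f \<longlongrightarrow> 0) F" "Bfun g F"
  shows "((\<lambda>x. f x * g x) \<longlongrightarrow> 0) F"
  using bounded_bilinear.Zfun_prod_Bfun[OF bounded_bilinear_mult] assms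
  by (simp add: tendsto_Zfun_iff)

section \<open>The critical angle\<close>

lemma arccos_tan_ineq:
  fixes c s :: real
  assumes c: "0 < c" "c < 1" and s: "pi/2 < s" "s < pi"
  shows "0 \<le> c\<^sup>2 * sin s + (arccos (- c) + c * sqrt (1 - c\<^sup>2) - s) * cos s"
proof -
  define \<theta> where "\<theta> = arccos (- c)"
  have cos_\<theta>: "cos \<theta> = - c" and sin_\<theta>: "sin \<theta> = sqrt (1 - c\<^sup>2)"
    unfolding \<theta>_def using c by (simp_all add: sin_arccos)
  have \<theta>: "pi/2 < \<theta>" "\<theta> \<le> pi"
    unfolding \<theta>_def using c arccos_lbound arccos_ubound arccos_less_arccos[of "- c" 0] by auto
  have cos_neg: "cos x < 0" if "pi/2 < x" "x \<le> pi" for x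
    using cos_mono_less_eq[of x "pi/2"] that by auto
  define m where "m x = x - c\<^sup>2 * tan x" for x
  have m_deriv: "(m has_real_derivative 1 - c\<^sup>2 / (cos x)\<^sup>2) (at x)" if "cos x \<noteq> 0" for x
    unfolding m_def using that by (auto intro!: derivative_eq_intros simp: divide_inverse)
  have m_deriv_sign: "1 - c\<^sup>2 / (cos x)\<^sup>2 \<le> 0 \<longleftrightarrow> x \<le> \<theta>" if "pi/2 < x" "x \<le> pi" for x
  proof -
    have "1 - c\<^sup>2 / (cos x)\<^sup>2 \<le> 0 \<longleftrightarrow> (- cos x)\<^sup>2 \<le> c\<^sup>2"
      using cos_neg[OF that] by (simp add: field_simps)
    also have "\<dots> \<longleftrightarrow> - cos x \<le> c"
      using cos_neg[OF that] c by (simp add: abs_le_square_iff[symmetric])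
    also have "\<dots> \<longleftrightarrow> cos \<theta> \<le> cos x" using cos_\<theta> by linarith
    also have "\<dots> \<longleftrightarrow> x \<le> \<theta>" using that \<theta> by (simp add: cos_mono_le_eq)
    finally show ?thesis .
  qed
  have "m \<theta> \<le> m s"
  proof (cases "s \<le> \<theta>")
    case True
    show ?thesis
    proof (rule DERIV_nonpos_imp_nonincreasing[OF True])
      fix x assume "s \<le> x" "x \<le> \<theta>"
      with s \<theta> cos_neg[of x] m_deriv_sign[of x]
      show "\<exists>y. (m has_real_derivative y) (at x) \<and> y \<le> 0"
        by (intro exI[of _ "1 - c\<^sup>2 / (cos x)\<^sup>2"] conjI m_deriv) auto
    qed
  next
    case False
    show ?thesis
    proof (rule DERIV_nonneg_imp_nondecreasing[of \<theta> s])
      fix x assume "\<theta> \<le> x" "x \<le> s"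
      with False s \<theta> cos_neg[of x] m_deriv_sign[of x]
      show "\<exists>y. (m has_real_derivative y) (at x) \<and> 0 \<le> y"
        by (intro exI[of _ "1 - c\<^sup>2 / (cos x)\<^sup>2"] conjI m_deriv) (auto simp: cos_\<theta>)
    qed (use False in auto)
  qed
  have m_\<theta>: "m \<theta> = \<theta> + c * sqrt (1 - c\<^sup>2)"
    unfolding m_def tan_def using cos_\<theta> sin_\<theta> c by (simp add: power2_eq_square field_simps)
  have "c\<^sup>2 * sin s + (\<theta> + c * sqrt (1 - c\<^sup>2) - s) * cos s = cos s * (m \<theta> - m s)"
    unfolding m_\<theta> unfolding m_def tan_def using cos_neg[of s] s by (simp add: field_simps)
  also have "\<dots> \<ge> 0" using cos_neg[of s] s \<open>m \<theta> \<le> m s\<close> by (simp add: mult_nonpos_nonpos)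
  finally show ?thesis unfolding \<theta>_def .
qed

definition critical_angle :: "real \<Rightarrow> real" where
  "critical_angle p = 2 * sqrt (2 * (p - 5)) / (p + 3) + arccos (- sqrt ((p - 5) / (p + 3)))"

lemma critical_angle_eq:
  fixes p :: real
  assumes "p > 5"
  defines "c \<equiv> sqrt ((p - 5) / (p + 3))"
  shows "critical_angle p = arccos (- c) + c * sqrt (1 - c\<^sup>2)"
proof -
  have "c\<^sup>2 = (p - 5) / (p + 3)"
    unfolding c_def using assms(1) by simp
  then have "c * sqrt (1 - c\<^sup>2) = sqrt ((p - 5) / (p + 3) * (1 - (p - 5) / (p + 3)))"
    unfolding real_sqrt_mult by (simp add: c_def)
  also have "\<dots> = 2 * sqrt (2 * (p - 5)) / (p + 3)"
  proof (rule real_sqrt_unique)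
    show "(2 * sqrt (2 * (p - 5)) / (p + 3))\<^sup>2 = (p - 5) / (p + 3) * (1 - (p - 5) / (p + 3))"
      using assms(1) by (simp add: field_simps)
        (simp add: power2_eq_square algebra_simps)
  qed (use assms(1) in simp)
  finally show ?thesis unfolding critical_angle_def c_def by simp
qed

definition pohozaev_kernel :: "real \<Rightarrow> real \<Rightarrow> real \<Rightarrow> real" where
  "pohozaev_kernel p \<beta> x = (p - 1) * (cos (\<beta> - 2 * x) - cos \<beta>) - (p + 3) * x * sin (\<beta> - 2 * x)"

lemma pohozaev_kernel_pos:
  assumes "p > 1" "0 < \<beta>" "\<beta> < pi" "\<beta> / 2 \<le> x" "x \<le> \<beta>"
  shows "0 < pohozaev_kernel p \<beta> x"
proof -
  have cos_le: "cos \<beta> \<le> cos (2 * x - \<beta>)" and sin_nonneg: "0 \<le> sin (2 * x - \<beta>)"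
    using assms by (auto simp: cos_mono_le_eq intro!: sin_ge_zero)
  have strict: "cos \<beta> < cos (2 * x - \<beta>) \<or> 0 < sin (2 * x - \<beta>)"
  proof (cases "x < \<beta>")
    case True
    then show ?thesis using assms by (simp add: cos_mono_less_eq)
  next
    case False
    then show ?thesis using assms by (simp add: sin_gt_zero)
  qed
  have "\<beta> - 2 * x = - (2 * x - \<beta>)" by simp
  then have eq: "pohozaev_kernel p \<beta> x
      = (p - 1) * (cos (2 * x - \<beta>) - cos \<beta>) + (p + 3) * x * sin (2 * x - \<beta>)"
    unfolding pohozaev_kernel_def by (simp only: cos_minus sin_minus)
  have "0 \<le> (p - 1) * (cos (2 * x - \<beta>) - cos \<beta>)" "0 \<le> (p + 3) * x * sin (2 * x - \<beta>)"
    using assms cos_le sin_nonneg by simp_all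
  moreover have "0 < (p - 1) * (cos (2 * x - \<beta>) - cos \<beta>) \<or> 0 < (p + 3) * x * sin (2 * x - \<beta>)"
    using strict assms by auto
  ultimately show ?thesis unfolding eq by linarith
qed

lemma pohozaev_kernel_deriv_nonneg:
  assumes p: "p > 5" and s: "0 < s" "s \<le> \<beta>" and \<beta>: "\<beta> < pi" "\<beta> \<le> critical_angle p"
  shows "0 \<le> (p - 5) * sin s + (p + 3) * (\<beta> - s) * cos s"
proof (cases "cos s \<ge> 0")
  case True
  then show ?thesis using p s \<beta> sin_ge_zero[of s] by simp
next
  case False
  define c where "c = sqrt ((p - 5) / (p + 3))"
  have c: "0 < c" "c < 1" and c2: "c\<^sup>2 = (p - 5) / (p + 3)"
    unfolding c_def using p by auto
  have "pi / 2 < s"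
    using False s cos_ge_zero[of s] by (cases "s \<le> pi / 2") auto
  then have "0 \<le> c\<^sup>2 * sin s + (critical_angle p - s) * cos s"
    using arccos_tan_ineq[OF c, of s] s \<beta> critical_angle_eq[OF p] by (simp add: c_def)
  also have "\<dots> \<le> c\<^sup>2 * sin s + (\<beta> - s) * cos s"
    using False \<beta> by (simp add: mult_right_mono_neg)
  also have "\<dots> = ((p - 5) * sin s + (p + 3) * (\<beta> - s) * cos s) / (p + 3)"
    using p unfolding c2 by (simp add: field_simps)
  finally show ?thesis using p by (simp add: zero_le_divide_iff)
qed

lemma pohozaev_kernel_nonneg:
  assumes p: "p > 5" and \<beta>: "0 < \<beta>" "\<beta> < pi" "\<beta> \<le> critical_angle p" and x: "0 \<le> x" "x \<le> \<beta>"
  shows "0 \<le> pohozaev_kernel p \<beta> x"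
proof (cases "\<beta> / 2 \<le> x")
  case True
  then show ?thesis using pohozaev_kernel_pos[of p \<beta> x] p \<beta> x by simp
next
  case False
  have deriv: "(pohozaev_kernel p \<beta> has_real_derivative
      (p - 5) * sin (\<beta> - 2 * y) + (p + 3) * (\<beta> - (\<beta> - 2 * y)) * cos (\<beta> - 2 * y)) (at y)" for y
    unfolding pohozaev_kernel_def[abs_def]
    by (auto intro!: derivative_eq_intros simp: algebra_simps)
  have "pohozaev_kernel p \<beta> 0 \<le> pohozaev_kernel p \<beta> x"
  proof (rule DERIV_nonneg_imp_nondecreasing[OF x(1)])
    fix y assume "0 \<le> y" "y \<le> x"
    then have "0 \<le> (p - 5) * sin (\<beta> - 2 * y) + (p + 3) * (\<beta> - (\<beta> - 2 * y)) * cos (\<beta> - 2 * y)"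
      using False p \<beta> by (intro pohozaev_kernel_deriv_nonneg) auto
    then show "\<exists>d. (pohozaev_kernel p \<beta> has_real_derivative d) (at y) \<and> 0 \<le> d"
      using deriv by blast
  qed
  then show ?thesis by (simp add: pohozaev_kernel_def)
qed

section \<open>Radial solutions\<close>

locale radial_solution =
  fixes p lam b :: real and u du ddu :: "real \<Rightarrow> real"
  assumes p_nonneg: "0 \<le> p" and lam_pos: "0 < lam" and b_pos: "0 < b"
    and u_cont: "continuous_on {0..b} u"
    and u_deriv_0: "(u has_real_derivative 0) (at_right 0)"
    and u_deriv: "\<And>r. 0 < r \<Longrightarrow> r < b \<Longrightarrow> (u has_real_derivative du r) (at r)"
    and du_deriv: "\<And>r. 0 < r \<Longrightarrow> r < b \<Longrightarrow> (du has_real_derivative ddu r) (at r)"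
    and equation: "\<And>r. 0 < r \<Longrightarrow> r < b \<Longrightarrow> ddu r + 2 / r * du r + lam * u r + u r powr p = 0"
    and u_pos: "\<And>r. 0 \<le> r \<Longrightarrow> r < b \<Longrightarrow> 0 < u r"
    and u_b: "u b = 0"
begin

lemma u_nonneg: "0 \<le> r \<Longrightarrow> r \<le> b \<Longrightarrow> 0 \<le> u r"
  using u_pos[of r] u_b by (cases "r = b") auto

lemma u_bounded:
  obtains U where "\<And>r. 0 \<le> r \<Longrightarrow> r \<le> b \<Longrightarrow> u r \<le> U"
proof -
  have "bounded (u ` {0..b})"
    by (intro compact_imp_bounded compact_continuous_image u_cont compact_Icc)
  then obtain U where "\<forall>y\<in>u ` {0..b}. \<bar>y\<bar> \<le> U"
    unfolding bounded_iff by auto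
  then have "u r \<le> U" if "0 \<le> r" "r \<le> b" for r
    using that by (meson abs_ge_self order_trans imageI atLeastAtMost_iff)
  then show ?thesis by (rule that)
qed

lemma u_tendsto_at_right_0: "(u \<longlongrightarrow> u 0) (at_right 0)"
  using u_cont b_pos unfolding continuous_on_def
  by (metis at_within_Icc_at_right atLeastAtMost_iff order_refl less_imp_le)

lemma u_tendsto_at_left:
  assumes "0 < c" "c \<le> b"
  shows "(u \<longlongrightarrow> u c) (at_left c)"
proof -
  have "continuous_on {0..c} u"
    using u_cont by (rule continuous_on_subset) (use assms in auto)
  then show ?thesis using assms unfolding continuous_on_def
    by (metis at_within_Icc_at_left atLeastAtMost_iff order_refl less_imp_le)
qed

lemma source_bounded:
  obtains K where "\<And>r. 0 \<le> r \<Longrightarrow> r \<le> b \<Longrightarrow> \<bar>lam * u r + u r powr p\<bar> \<le> K"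
proof -
  obtain U where U: "\<And>r. 0 \<le> r \<Longrightarrow> r \<le> b \<Longrightarrow> u r \<le> U"
    using u_bounded by blast
  have "\<bar>lam * u r + u r powr p\<bar> \<le> lam * U + U powr p" if "0 \<le> r" "r \<le> b" for r
  proof -
    have "u r powr p \<le> U powr p"
      using u_nonneg[OF that] U[OF that] p_nonneg by (intro powr_mono2) auto
    moreover have "lam * u r \<le> lam * U" using lam_pos U[OF that] by simp
    moreover have "0 \<le> lam * u r" using lam_pos u_nonneg[OF that] by simp
    ultimately show ?thesis by simp
  qed
  then show ?thesis using that by blast
qed

lemma flux_deriv:
  assumes "0 < r" "r < b"
  shows "((\<lambda>r. r\<^sup>2 * du r) has_real_derivative - (r\<^sup>2 * (lam * u r + u r powr p))) (at r)"
proof -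
  have ddu_eq: "ddu r = - (2 / r * du r) - (lam * u r + u r powr p)"
    using equation[OF assms] by linarith
  have "((\<lambda>r. r\<^sup>2 * du r) has_real_derivative 2 * r * du r + r\<^sup>2 * ddu r) (at r)"
    by (auto intro!: derivative_eq_intros du_deriv[OF assms] simp: algebra_simps)
  moreover have "2 * r * du r + r\<^sup>2 * ddu r = - (r\<^sup>2 * (lam * u r + u r powr p))"
    unfolding ddu_eq using assms by (simp add: field_simps power2_eq_square)
  ultimately show ?thesis by simp
qed

lemma flux_diff_le:
  assumes K: "\<And>r. 0 \<le> r \<Longrightarrow> r \<le> b \<Longrightarrow> \<bar>lam * u r + u r powr p\<bar> \<le> K"
    and "0 < s" "s \<le> t" "t < b"
  shows "\<bar>t\<^sup>2 * du t - s\<^sup>2 * du s\<bar> \<le> t\<^sup>2 * K * (t - s)"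
proof (rule DERIV_abs_bound_imp_abs_diff_le[OF \<open>s \<le> t\<close>])
  fix x assume x: "s \<le> x" "x \<le> t"
  show "((\<lambda>r. r\<^sup>2 * du r) has_real_derivative - (x\<^sup>2 * (lam * u x + u x powr p))) (at x)"
    using flux_deriv x assms by auto
  have "x\<^sup>2 \<le> t\<^sup>2" using x assms by (intro power_mono) auto
  then show "\<bar>- (x\<^sup>2 * (lam * u x + u x powr p))\<bar> \<le> t\<^sup>2 * K"
    using K[of x] x assms unfolding abs_minus_cancel abs_mult by (intro mult_mono) auto
qed

lemma du_Bfun_at_left:
  assumes c: "0 < c" "c \<le> b"
  shows "Bfun du (at_left c)"
proof -
  obtain K where K: "\<And>r. 0 \<le> r \<Longrightarrow> r \<le> b \<Longrightarrow> \<bar>lam * u r + u r powr p\<bar> \<le> K"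
    using source_bounded by blast
  have "0 \<le> K" using K[of 0] b_pos by auto
  define C where "C = \<bar>(c/2)\<^sup>2 * du (c/2)\<bar> + c\<^sup>2 * K * c"
  have "\<bar>du r\<bar> \<le> C / (c/2)\<^sup>2" if r: "c/2 < r" "r < c" for r
  proof -
    have "r\<^sup>2 * \<bar>du r\<bar> \<le> \<bar>(c/2)\<^sup>2 * du (c/2)\<bar> + \<bar>r\<^sup>2 * du r - (c/2)\<^sup>2 * du (c/2)\<bar>"
      using abs_triangle_ineq2[of "r\<^sup>2 * du r" "(c/2)\<^sup>2 * du (c/2)"] by (simp add: abs_mult)
    also have "\<bar>r\<^sup>2 * du r - (c/2)\<^sup>2 * du (c/2)\<bar> \<le> r\<^sup>2 * K * (r - c/2)"
      using r c by (intro flux_diff_le K) auto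
    also have "\<dots> \<le> c\<^sup>2 * K * c"
      using r c \<open>0 \<le> K\<close> by (intro mult_mono power_mono) auto
    finally have "r\<^sup>2 * \<bar>du r\<bar> \<le> C"
      unfolding C_def by simp
    moreover have "(c/2)\<^sup>2 * \<bar>du r\<bar> \<le> r\<^sup>2 * \<bar>du r\<bar>"
      using r c by (intro mult_right_mono power_mono) auto
    ultimately show ?thesis using c by (simp add: field_simps)
  qed
  then show ?thesis
    using c by (intro BfunI[where K = "C / (c/2)\<^sup>2"])
      (auto simp: eventually_at_left_field intro!: exI[of _ "c/2"])
qed

text \<open>Only \<open>u'(0) = 0\<close> is known at the centre, not continuity of \<open>u'\<close>: the mean value
  theorem gives \<open>\<xi> \<in> (s, 2s)\<close> with \<open>|u'(\<xi>)| \<le> 3\<close>, and the flux estimate carries this bound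
  from \<open>\<xi>\<close> back to \<open>s\<close>.\<close>

lemma du_Bfun_at_right_0: "Bfun du (at_right 0)"
proof -
  obtain K where K: "\<And>r. 0 \<le> r \<Longrightarrow> r \<le> b \<Longrightarrow> \<bar>lam * u r + u r powr p\<bar> \<le> K"
    using source_bounded by blast
  have "0 \<le> K" using K[of 0] b_pos by auto
  have "((\<lambda>y. (u y - u 0) / (y - 0)) \<longlongrightarrow> 0) (at_right 0)"
    using u_deriv_0 by (simp add: has_field_derivative_iff)
  from tendstoD[OF this, of 1] obtain d where d: "0 < d"
    and "\<And>y. 0 < y \<Longrightarrow> y < d \<Longrightarrow> \<bar>(u y - u 0) / y\<bar> < 1"
    by (auto simp: eventually_at_right_field)
  then have near_0: "\<bar>u y - u 0\<bar> \<le> y" if "0 < y" "y < d" for y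
    using that by (fastforce simp: abs_div divide_less_eq)
  have "\<bar>du s\<bar> \<le> 12 + 4 * K * b" if s: "0 < s" "2 * s < d" "2 * s < b" for s
  proof -
    obtain \<xi> where \<xi>: "s < \<xi>" "\<xi> < 2 * s" "u (2 * s) - u s = (2 * s - s) * du \<xi>"
      using MVT2[of s "2 * s" u du] u_deriv s by force
    have "\<bar>u (2 * s) - u s\<bar> \<le> 3 * s" using near_0[of s] near_0[of "2 * s"] s by linarith
    then have "\<bar>du \<xi>\<bar> \<le> 3" using \<xi>(3) s by (simp add: abs_mult)
    have "\<bar>\<xi>\<^sup>2 * du \<xi> - s\<^sup>2 * du s\<bar> \<le> \<xi>\<^sup>2 * K * (\<xi> - s)"
      using \<xi> s by (intro flux_diff_le K) auto
    then have "s\<^sup>2 * \<bar>du s\<bar> \<le> \<xi>\<^sup>2 * \<bar>du \<xi>\<bar> + \<xi>\<^sup>2 * K * (\<xi> - s)"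
      using abs_triangle_ineq2[of "s\<^sup>2 * du s" "\<xi>\<^sup>2 * du \<xi>"]
      by (simp add: abs_mult abs_minus_commute)
    also have "\<dots> \<le> (2 * s)\<^sup>2 * 3 + (2 * s)\<^sup>2 * K * s"
      using \<xi> s \<open>\<bar>du \<xi>\<bar> \<le> 3\<close> \<open>0 \<le> K\<close>
      by (intro add_mono mult_mono power_mono) auto
    also have "\<dots> = s\<^sup>2 * (12 + 4 * K * s)" by (simp add: power2_eq_square algebra_simps)
    finally have "\<bar>du s\<bar> \<le> 12 + 4 * K * s" using s by simp
    also have "\<dots> \<le> 12 + 4 * K * b" using s \<open>0 \<le> K\<close> by (simp add: mult_left_mono)
    finally show ?thesis .
  qed
  then show ?thesis
    using d b_pos by (intro BfunI[where K = "12 + 4 * K * b"])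
      (auto simp: eventually_at_right_field intro!: exI[of _ "min (d/2) (b/2)"])
qed

definition v :: "real \<Rightarrow> real" where
  "v r = r * u r"

definition dv :: "real \<Rightarrow> real" where
  "dv r = u r + r * du r"

lemma v_deriv: "0 < r \<Longrightarrow> r < b \<Longrightarrow> (v has_real_derivative dv r) (at r)"
  unfolding v_def[abs_def] dv_def by (auto intro!: derivative_eq_intros u_deriv)

lemma dv_deriv:
  assumes "0 < r" "r < b"
  shows "(dv has_real_derivative - (lam * v r) - r * u r powr p) (at r)"
proof -
  have "(dv has_real_derivative 2 * du r + r * ddu r) (at r)"
    unfolding dv_def[abs_def] by (auto intro!: derivative_eq_intros u_deriv du_deriv assms)
  moreover have "2 * du r + r * ddu r = - (lam * v r) - r * u r powr p"
    using equation[OF assms] assms unfolding v_def by (simp add: field_simps)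
  ultimately show ?thesis by simp
qed

lemma v_nonneg: "0 \<le> r \<Longrightarrow> r \<le> b \<Longrightarrow> 0 \<le> v r"
  unfolding v_def using u_nonneg by simp

lemma v_tendsto_at_right_0: "(v \<longlongrightarrow> 0) (at_right 0)"
  unfolding v_def[abs_def] using tendsto_mult[OF tendsto_ident_at u_tendsto_at_right_0] by simp

lemma v_tendsto_at_left: "0 < c \<Longrightarrow> c \<le> b \<Longrightarrow> (v \<longlongrightarrow> v c) (at_left c)"
  unfolding v_def[abs_def] by (intro tendsto_intros u_tendsto_at_left)

lemma dv_Bfun_at_right_0: "Bfun dv (at_right 0)"
  unfolding dv_def[abs_def]
  by (intro Bfun_add Bfun_mult tendsto_imp_Bfun[OF u_tendsto_at_right_0]
      tendsto_imp_Bfun[OF tendsto_ident_at] du_Bfun_at_right_0)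

lemma dv_Bfun_at_left: "0 < c \<Longrightarrow> c \<le> b \<Longrightarrow> Bfun dv (at_left c)"
  unfolding dv_def[abs_def]
  by (intro Bfun_add Bfun_mult tendsto_imp_Bfun[OF u_tendsto_at_left]
      tendsto_imp_Bfun[OF tendsto_ident_at] du_Bfun_at_left)

theorem radius_less_pi: "sqrt lam * b < pi"
proof (rule ccontr)
  define \<mu> where "\<mu> = sqrt lam"
  have \<mu>: "0 < \<mu>" "\<mu> * \<mu> = lam" unfolding \<mu>_def using lam_pos by auto
  define c where "c = pi / \<mu>"
  assume "\<not> sqrt lam * b < pi"
  then have c: "0 < c" "c \<le> b" "\<mu> * c = pi"
    unfolding c_def \<mu>_def using lam_pos by (auto simp: field_simps)
  define W where "W r = sin (\<mu> * r) * dv r - \<mu> * cos (\<mu> * r) * v r" for r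
  define W' where "W' r = - (r * u r powr p * sin (\<mu> * r))" for r
  have "\<mu> * v c < 0"
  proof (rule DERIV_nonpos_imp_limits_less[of 0 "c/2" c W W'])
    show "(W has_real_derivative W' r) (at r)" if "0 < r" "r < c" for r
    proof -
      have "(W has_real_derivative cos (\<mu> * r) * \<mu> * dv r + sin (\<mu> * r) * (- (lam * v r) - r * u r powr p)
          - (\<mu> * (- sin (\<mu> * r) * \<mu>) * v r + \<mu> * cos (\<mu> * r) * dv r)) (at r)"
        unfolding W_def[abs_def] using that c
        by (auto intro!: derivative_eq_intros v_deriv dv_deriv)
      then show ?thesis unfolding W'_def by (simp add: algebra_simps flip: \<mu>(2))
    qed
    show "W' r \<le> 0" if "0 < r" "r < c" for r
    proof -
      have "\<mu> * r < \<mu> * c" using that \<mu> by simp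
      then have "0 < sin (\<mu> * r)" using that c \<mu> by (intro sin_gt_zero) auto
      then show ?thesis unfolding W'_def using that by simp
    qed
    have "\<mu> * (c/2) = pi/2" using c by simp
    moreover have "0 < u (c/2)" using c by (intro u_pos) auto
    ultimately show "W' (c/2) < 0" unfolding W'_def using c by simp
    have "((\<lambda>r. sin (\<mu> * r)) \<longlongrightarrow> sin (\<mu> * 0)) (at_right 0)"
      by (intro tendsto_intros)
    then have "((\<lambda>r. sin (\<mu> * r) * dv r) \<longlongrightarrow> 0) (at_right 0)"
      by (intro tendsto_zero_mult_Bfun dv_Bfun_at_right_0) simp
    moreover have "((\<lambda>r. \<mu> * cos (\<mu> * r) * v r) \<longlongrightarrow> \<mu> * cos (\<mu> * 0) * 0) (at_right 0)"
      by (intro tendsto_intros v_tendsto_at_right_0)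
    ultimately show "(W \<longlongrightarrow> 0) (at_right 0)"
      unfolding W_def[abs_def] using tendsto_diff by fastforce
    have "((\<lambda>r. sin (\<mu> * r)) \<longlongrightarrow> sin (\<mu> * c)) (at_left c)"
      by (intro tendsto_intros)
    then have "((\<lambda>r. sin (\<mu> * r) * dv r) \<longlongrightarrow> 0) (at_left c)"
      using c by (intro tendsto_zero_mult_Bfun dv_Bfun_at_left) auto
    moreover have "((\<lambda>r. \<mu> * cos (\<mu> * r) * v r) \<longlongrightarrow> \<mu> * cos (\<mu> * c) * v c) (at_left c)"
      using c by (intro tendsto_intros v_tendsto_at_left) auto
    ultimately show "(W \<longlongrightarrow> \<mu> * v c) (at_left c)"
      unfolding W_def[abs_def] using tendsto_diff c by fastforce
  qed (use c in auto)
  moreover have "0 \<le> \<mu> * v c" using \<mu> c v_nonneg by simp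
  ultimately show False by simp
qed


definition pohozaev :: "(real \<Rightarrow> real) \<Rightarrow> (real \<Rightarrow> real) \<Rightarrow> (real \<Rightarrow> real) \<Rightarrow> real \<Rightarrow> real" where
  "pohozaev a a' a'' r =
     a r * ((dv r)\<^sup>2 / 2 + lam * (v r)\<^sup>2 / 2 + r\<^sup>2 * (u r powr (p + 1) / (p + 1)))
     + v r * (a'' r * v r / 4 - a' r * dv r / 2)"

lemma pohozaev_deriv:
  assumes r: "0 < r" "r < b"
    and a: "(a has_real_derivative a' r) (at r)" "(a' has_real_derivative a'' r) (at r)"
      "(a'' has_real_derivative - 4 * lam * a' r) (at r)"
  shows "(pohozaev a a' a'' has_real_derivative
      r * u r powr (p + 1) / (2 * (p + 1)) * ((p + 3) * r * a' r - 2 * (p - 1) * a r)) (at r)"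
proof -
  have "p + 1 \<noteq> 0" using p_nonneg by simp
  define W where "W s = u s powr (p + 1) / (p + 1)" for s
  have W_deriv: "(W has_real_derivative u r powr p * du r) (at r)"
    unfolding W_def[abs_def]
    using DERIV_cdivide[OF DERIV_fun_powr[OF u_deriv[OF r] u_pos, of "p + 1"], of "p + 1"]
      r \<open>p + 1 \<noteq> 0\<close> by simp
  \<comment> \<open>eliminating \<open>u\<^sup>p\<close> in favour of \<open>W\<close> leaves \<open>u r\<close> as the only denominator\<close>
  have powr_eq: "u r powr p = (p + 1) * W r / u r"
    unfolding W_def using u_pos[of r] r \<open>p + 1 \<noteq> 0\<close> by (simp add: powr_add)
  have "pohozaev a a' a'' = (\<lambda>r. a r * ((dv r)\<^sup>2 / 2 + lam * (v r)\<^sup>2 / 2 + r\<^sup>2 * W r)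
     + v r * (a'' r * v r / 4 - a' r * dv r / 2))"
    unfolding pohozaev_def W_def by simp
  then have "(pohozaev a a' a'' has_real_derivative
      r * W r / 2 * ((p + 3) * r * a' r - 2 * (p - 1) * a r)) (at r)"
    apply (elim ssubst)
    apply (rule DERIV_cong)
     apply (rule derivative_eq_intros v_deriv[OF r] dv_deriv[OF r] W_deriv a refl
        | (simp; fail))+
    using u_pos[of r] r unfolding powr_eq
    by (simp add: v_def dv_def field_simps power2_eq_square)
  then show ?thesis by (simp add: W_def algebra_simps)
qed

lemma pohozaev_tendsto_0:
  assumes "(a \<longlongrightarrow> 0) F" "Bfun a' F" "Bfun a'' F" "(v \<longlongrightarrow> 0) F" "Bfun dv F"
    and "eventually (\<lambda>r. 0 \<le> r \<and> r \<le> b) F"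
  shows "(pohozaev a a' a'' \<longlongrightarrow> 0) F"
proof -
  obtain U where U: "\<And>r. 0 \<le> r \<Longrightarrow> r \<le> b \<Longrightarrow> u r \<le> U"
    using u_bounded by blast
  have "eventually (\<lambda>r. norm (r\<^sup>2 * (u r powr (p + 1) / (p + 1))) \<le> b\<^sup>2 * (U powr (p + 1) / (p + 1))) F"
    using assms(6)
  proof eventually_elim
    case (elim r)
    have "r\<^sup>2 * u r powr (p + 1) \<le> b\<^sup>2 * U powr (p + 1)"
      using elim U[of r] u_nonneg[of r] p_nonneg by (intro mult_mono power_mono powr_mono2) auto
    then show ?case using p_nonneg by (simp add: divide_right_mono)
  qed
  then have P: "Bfun (\<lambda>r. r * r * (u r powr (p + 1) * inverse (p + 1))) F"
    by (intro BfunI) (simp add: power2_eq_square divide_inverse)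
  have V: "Bfun v F" using assms(4) by (rule tendsto_imp_Bfun)
  have "Bfun (\<lambda>r. (dv r)\<^sup>2 / 2 + lam * (v r)\<^sup>2 / 2 + r\<^sup>2 * (u r powr (p + 1) / (p + 1))) F"
    unfolding power2_eq_square divide_inverse
    by (rule P V Bfun_add Bfun_diff Bfun_mult Bfun_const assms(2,3,5))+
  moreover have "Bfun (\<lambda>r. a'' r * v r / 4 - a' r * dv r / 2) F"
    unfolding divide_inverse
    by (rule V Bfun_add Bfun_diff Bfun_mult Bfun_const assms(2,3,5))+
  ultimately show ?thesis
    unfolding pohozaev_def[abs_def]
    using tendsto_add[OF tendsto_zero_mult_Bfun tendsto_zero_mult_Bfun] assms(1,4) by fastforce
qed

theorem critical_angle_less:
  assumes p: "p > 5"
  shows "critical_angle p < sqrt lam * b"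
proof (rule ccontr)
  define \<mu> where "\<mu> = sqrt lam"
  have \<mu>: "0 < \<mu>" "\<mu> * \<mu> = lam" unfolding \<mu>_def using lam_pos by auto
  define \<beta> where "\<beta> = \<mu> * b"
  assume "\<not> critical_angle p < sqrt lam * b"
  then have \<beta>: "0 < \<beta>" "\<beta> < pi" "\<beta> \<le> critical_angle p"
    using radius_less_pi \<mu> b_pos unfolding \<beta>_def \<mu>_def by auto
  \<comment> \<open>\<open>a r = sin (\<mu> r) sin (\<mu> (b - r))\<close>, written so that its derivatives are explicit\<close>
  define a where "a r = (cos (\<mu> * (b - 2 * r)) - cos \<beta>) / 2" for r
  define a' where "a' r = \<mu> * sin (\<mu> * (b - 2 * r))" for r
  define a'' where "a'' r = - 2 * lam * cos (\<mu> * (b - 2 * r))" for r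
  have a_deriv: "(a has_real_derivative a' r) (at r)" for r
    unfolding a_def[abs_def] a'_def by (auto intro!: derivative_eq_intros simp: algebra_simps)
  have a'_deriv: "(a' has_real_derivative a'' r) (at r)" for r
    unfolding a'_def[abs_def] a''_def
    by (auto intro!: derivative_eq_intros simp: algebra_simps \<mu>(2)[symmetric])
  have a''_deriv: "(a'' has_real_derivative - 4 * lam * a' r) (at r)" for r
    unfolding a''_def[abs_def] a'_def by (auto intro!: derivative_eq_intros simp: algebra_simps)
  have kernel: "(p + 3) * r * a' r - 2 * (p - 1) * a r = - pohozaev_kernel p \<beta> (\<mu> * r)" for r
  proof -
    have arg: "\<mu> * (b - 2 * r) = \<beta> - 2 * (\<mu> * r)" unfolding \<beta>_def by (simp add: algebra_simps)
    show ?thesis unfolding a_def a'_def pohozaev_kernel_def arg by (simp add: field_simps)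
  qed
  define E' where
    "E' r = r * u r powr (p + 1) / (2 * (p + 1)) * ((p + 3) * r * a' r - 2 * (p - 1) * a r)" for r
  have E'_eq: "E' r = - (r * u r powr (p + 1) / (2 * (p + 1)) * pohozaev_kernel p \<beta> (\<mu> * r))" for r
    unfolding E'_def kernel by simp
  have "(0::real) < 0"
  proof (rule DERIV_nonpos_imp_limits_less[of 0 "3 * b / 4" b "pohozaev a a' a''" E'])
    show "(pohozaev a a' a'' has_real_derivative E' r) (at r)" if "0 < r" "r < b" for r
      unfolding E'_def using that a_deriv a'_deriv a''_deriv by (rule pohozaev_deriv)
    show "E' r \<le> 0" if "0 < r" "r < b" for r
    proof -
      have "0 \<le> pohozaev_kernel p \<beta> (\<mu> * r)"
        using that p \<beta> \<mu> unfolding \<beta>_def by (intro pohozaev_kernel_nonneg) auto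
      then show ?thesis unfolding E'_eq using that p u_pos[of r] by simp
    qed
    have "0 < pohozaev_kernel p \<beta> (\<mu> * (3 * b / 4))"
      using p \<beta> \<mu> b_pos unfolding \<beta>_def by (intro pohozaev_kernel_pos) auto
    then show "E' (3 * b / 4) < 0" unfolding E'_eq using p b_pos u_pos[of "3 * b / 4"] by simp
    have weight_lim: "(a \<longlongrightarrow> a x) (at x within S)" "(a' \<longlongrightarrow> a' x) (at x within S)"
      "(a'' \<longlongrightarrow> a'' x) (at x within S)" for x S
      unfolding a_def[abs_def] a'_def[abs_def] a''_def[abs_def] by (intro tendsto_intros | simp)+
    then have a'_Bfun: "Bfun a' (at x within S)" and a''_Bfun: "Bfun a'' (at x within S)" for x S
      by (blast intro: tendsto_imp_Bfun)+
    have "a 0 = 0" "a b = 0" unfolding a_def \<beta>_def by simp_all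
    then have a_lim: "(a \<longlongrightarrow> 0) (at_right 0)" "(a \<longlongrightarrow> 0) (at_left b)"
      using weight_lim(1) by metis+
    show "(pohozaev a a' a'' \<longlongrightarrow> 0) (at_right 0)"
      using v_tendsto_at_right_0 dv_Bfun_at_right_0 b_pos
      by (intro pohozaev_tendsto_0 a_lim a'_Bfun a''_Bfun)
        (auto simp: eventually_at_right_field intro: exI[of _ b])
    have "(v \<longlongrightarrow> 0) (at_left b)" using v_tendsto_at_left[of b] b_pos u_b by (simp add: v_def)
    then show "(pohozaev a a' a'' \<longlongrightarrow> 0) (at_left b)"
      using dv_Bfun_at_left[of b] b_pos
      by (intro pohozaev_tendsto_0 a_lim a'_Bfun a''_Bfun)
        (auto simp: eventually_at_left_field intro: exI[of _ 0])
  qed (use b_pos in auto)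
  then show False by simp
qed

end

lemma positive_radial_solution_imp_radial_solution:
  assumes "0 \<le> p" "0 < lam" "0 < b" "positive_radial_solution p lam b u"
  obtains du ddu where "radial_solution p lam b u du ddu"
proof -
  obtain du where cont: "continuous_on {0..b} u"
    and du: "\<forall>r\<in>{0..<b}. (u has_real_derivative du r) (at r within {0..b})"
    and ddu: "\<forall>r\<in>{0<..<b}. \<exists>d2. (du has_real_derivative d2) (at r) \<and>
        d2 + 2 / r * du r + lam * u r + u r powr p = 0"
    and "du 0 = 0" "u b = 0" "\<forall>r\<in>{0..<b}. 0 < u r"
    using assms(4) unfolding positive_radial_solution_def by blast
  from ddu obtain ddu where "\<forall>r\<in>{0<..<b}. (du has_real_derivative ddu r) (at r) \<and>
      ddu r + 2 / r * du r + lam * u r + u r powr p = 0"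
    by metis
  moreover have "(u has_real_derivative du r) (at r)" if "0 < r" "r < b" for r
  proof -
    have "(u has_real_derivative du r) (at r within {0..b})" using du that by simp
    then show ?thesis using that at_within_interior[of r "{0..b}"] by simp
  qed
  moreover have "(u has_real_derivative 0) (at_right 0)"
  proof -
    have "(u has_real_derivative du 0) (at 0 within {0..b})" using du assms(3) by simp
    then show ?thesis using \<open>du 0 = 0\<close> at_within_Icc_at_right[OF assms(3)] by simp
  qed
  ultimately have "radial_solution p lam b u du ddu"
    using assms cont \<open>u b = 0\<close> \<open>\<forall>r\<in>{0..<b}. 0 < u r\<close> by unfold_locales auto
  then show thesis by (rule that)
qed

theorem corollary1p8:
  fixes p lam b :: real and u :: "real \<Rightarrow> real"
  assumes "p > 5" and "lam > 0" and "b > 0"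
    and "positive_radial_solution p lam b u"
  shows "(2 * sqrt (2 * (p - 5)) / (p + 3) + arccos (- sqrt ((p - 5) / (p + 3)))) / sqrt lam < b
         \<and> b < pi / sqrt lam"
proof -
  have "0 \<le> p" using assms(1) by simp
  then obtain du ddu where "radial_solution p lam b u du ddu"
    using positive_radial_solution_imp_radial_solution assms(2-4) by blast
  then interpret radial_solution p lam b u du ddu .
  have "0 < sqrt lam" using assms(2) by simp
  then show ?thesis
    using critical_angle_less[OF assms(1)] radius_less_pi
    unfolding critical_angle_def by (simp add: field_simps)
qed

end
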